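(* Let $\delta_q$ satisfy $0<\delta_q<\min\left\{\frac{\sqrt2-1}{|\lambda_1|},\frac{2}{|\lambda_1-\lambda_{\max}|}\right\}$ and set $\delta_e=\min\{\delta^*,\delta_q\}$. Then for all $U\in B(V_*,\eta_a)\cap(\mathcal{V}_0)^N\cap\mathcal{M}_{\leqslant}^{N;N_g}$ and all $s\in[0,\delta_e]$, $$E(U)-E(g(U,s))\geqslant s\Big(\frac12-\frac{s}{2}|\lambda_1|\Big)\Big\|\mathcal{A}_{\frac{\hat g(U,s)+U}{2}}\frac{\hat g(U,s)+U}{2}\Big\|^2.$$
   Context: Let $\mathcal{V}^{N_g}$ be a real Hilbert space of finite dimension $N_g$ with inner product $(\cdot,\cdot)$ (in the paper a finite element subspace of $H_0^1(\Omega)$ with the $L^2(\Omega)$ inner product), and let $H:\mathcal{V}^{N_g}\to\mathcal{V}^{N_g}$ be a self-adjoint linear operator with eigenvalues $\lambda_1\leqslant\lambda_2\leqslant\cdots\leqslant\lambda_{N_g}$, $\lambda_{\max}=\lambda_{N_g}$; it is assumed that $\lambda_1<0$. Fix $N<N_g$ with $\lambda_N<\lambda_{N+1}$. Elements of $(\mathcal{V}^{N_g})^N$ are written $U=(u_1,\dots,u_N)$; $U^\top V=((u_i,v_j))_{i,j=1}^N$; for a real $N\times N$ matrix $A=(a_{kj})$, $UA$ is the element whose $j$-th component is $\sum_k a_{kj}u_k$; $HU=(Hu_1,\dots,Hu_N)$; $\|U\|=\operatorname{tr}(U^\top U)^{1/2}$. For symmetric matrices, $A\leqslant B$ means $B-A$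 is positive semidefinite and $A>0$ positive definite. Set $E(U)=\frac12\operatorname{tr}(U^\top HU)$ and $\nabla E(U)=HU$. For $U$, $\mathcal{A}_U=\nabla E(U)U^\top-U\nabla E(U)^\top$ is the linear operator on $\mathcal{V}^{N_g}$ given by $\mathcal{A}_Uw=\sum_{i=1}^N\big(Hu_i\,(u_i,w)-u_i\,(Hu_i,w)\big)$, applied componentwise. Quasi-Stiefel set: $\mathcal{M}_{\leqslant}^{N;N_g}=\{U:0<U^\top U\leqslant I_N\}$. Let $V_*\in(\mathcal{V}^{N_g})^N$ with $V_*^\top V_*=I_N$ and $HV_*=V_*\operatorname{diag}(\lambda_1,\dots,\lambda_N)$. $\mathcal{O}^N$ is the set of $N\times N$ orthogonal matrices, $\operatorname{dist}([U],[V_*])=\inf_{Q\in\mathcal{O}^N}\|UQ-V_*\|$, $B(U,\eta)=\{W:\|W-U\|\leqslant\eta\}$, $B([V_*],\eta)=\{W:\operatorname{dist}([W],[V_*])\leqslant\eta\}$. For $j=1,\dots,N$, let $\mathcal{V}_{0_j}=\operatorname{span}\{v_{j,1},\dots,v_{j,d_j}\}$ ($d_j\geqslant1$) with each $v_{j,k}$ an eigenvector of $H$, $(\mathcal{V}_0)^N=\mathcal{V}_{0_1}\times\cdots\times\mathcal{V}_{0_N}$, and $\lambda_{\max}^0=\max_{j,k}\frac{(v_{j,k},Hv_{j,k})}{(v_{j,k},v_{j,k})}$. Standing assumption: $\lambda_{\max}^0\leqslant0$. Fix constants $\eta_a,\eta_b,\delta^*>0$ such that (as asserted in the paper) there is a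 unique function $\hat g:B(V_*,\eta_a)\times[0,\delta^*]\to B(V_*,\eta_b)$ with $\hat g(U,s)-U=-s\,\mathcal{A}_{\frac{\hat g(U,s)+U}{2}}\frac{\hat g(U,s)+U}{2}$, and a unique function $g:B([V_*],\eta_a)\times[0,\delta^*]\to B([V_*],\eta_b)$ with $g(U,s)=\hat g(U,s)-s\nabla E(\hat g(U,s))\big(I_N-\hat g(U,s)^\top\hat g(U,s)\big)$ (extended from $B(V_*,\eta_a)$ by $g(UQ,s)=g(U,s)Q$, $Q\in\mathcal{O}^N$). One step of the quasi-orthogonal scheme $\hat U_{n+1}=U_n-s_n\mathcal{A}_{\tilde U}\tilde U$, $\tilde U=\frac{U_n+\hat U_{n+1}}2$, $U_{n+1}=\hat U_{n+1}-s_nH\hat U_{n+1}(I_N-\hat U_{n+1}^\top\hat U_{n+1})$ is given by $\hat U_{n+1}=\hat g(U_n,s_n)$, $U_{n+1}=g(U_n,s_n)$. *)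

theory Defs
  imports "HOL-Analysis.Analysis"
begin

text \<open>Elements of (V^{N_g})^N are represented as functions nat => 'v, of which only the
components with index i < N matter.  Real N x N matrices are functions nat => nat => real
(entries with indices < N matter).\<close>

definition tinner :: "nat \<Rightarrow> (nat \<Rightarrow> 'v::real_inner) \<Rightarrow> (nat \<Rightarrow> 'v) \<Rightarrow> nat \<Rightarrow> nat \<Rightarrow> real" where
  "tinner N U V = (\<lambda>i j. inner (U i) (V j))"

definition tmul :: "nat \<Rightarrow> (nat \<Rightarrow> 'v::real_vector) \<Rightarrow> (nat \<Rightarrow> nat \<Rightarrow> real) \<Rightarrow> nat \<Rightarrow> 'v" where
  "tmul N U A = (\<lambda>j. \<Sum>k<N. A k j *\<^sub>R U k)"

definition idm :: "nat \<Rightarrow> nat \<Rightarrow> real" where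
  "idm = (\<lambda>i j. if i = j then 1 else 0)"

definition tnorm :: "nat \<Rightarrow> (nat \<Rightarrow> 'v::real_inner) \<Rightarrow> real" where
  "tnorm N U = sqrt (\<Sum>i<N. inner (U i) (U i))"

definition tball :: "nat \<Rightarrow> (nat \<Rightarrow> 'v::real_inner) \<Rightarrow> real \<Rightarrow> (nat \<Rightarrow> 'v) set" where
  "tball N U \<eta> = {W. tnorm N (\<lambda>i. W i - U i) \<le> \<eta>}"

definition psd_mat :: "nat \<Rightarrow> (nat \<Rightarrow> nat \<Rightarrow> real) \<Rightarrow> bool" where
  "psd_mat N A \<longleftrightarrow> (\<forall>i<N. \<forall>j<N. A i j = A j i) \<and>
     (\<forall>x::nat \<Rightarrow> real. (\<Sum>i<N. \<Sum>j<N. x i * A i j * x j) \<ge> 0)"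

definition pd_mat :: "nat \<Rightarrow> (nat \<Rightarrow> nat \<Rightarrow> real) \<Rightarrow> bool" where
  "pd_mat N A \<longleftrightarrow> (\<forall>i<N. \<forall>j<N. A i j = A j i) \<and>
     (\<forall>x::nat \<Rightarrow> real. (\<exists>i<N. x i \<noteq> 0) \<longrightarrow> (\<Sum>i<N. \<Sum>j<N. x i * A i j * x j) > 0)"

definition quasi_stiefel :: "nat \<Rightarrow> (nat \<Rightarrow> 'v::real_inner) set" where
  "quasi_stiefel N = {U. pd_mat N (tinner N U U) \<and>
        psd_mat N (\<lambda>i j. idm i j - tinner N U U i j)}"

definition energy :: "nat \<Rightarrow> ('v \<Rightarrow> 'v) \<Rightarrow> (nat \<Rightarrow> 'v::real_inner) \<Rightarrow> real" where
  "energy N H U = (1/2) * (\<Sum>i<N. inner (U i) (H (U i)))"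

definition Aop :: "nat \<Rightarrow> ('v \<Rightarrow> 'v) \<Rightarrow> (nat \<Rightarrow> 'v::real_inner) \<Rightarrow> 'v \<Rightarrow> 'v" where
  "Aop N H U w = (\<Sum>i<N. inner (U i) w *\<^sub>R H (U i) - inner (H (U i)) w *\<^sub>R U i)"

definition Aapp :: "nat \<Rightarrow> ('v \<Rightarrow> 'v) \<Rightarrow> (nat \<Rightarrow> 'v::real_inner) \<Rightarrow> (nat \<Rightarrow> 'v) \<Rightarrow> nat \<Rightarrow> 'v" where
  "Aapp N H U W = (\<lambda>j. Aop N H U (W j))"

definition midpt :: "(nat \<Rightarrow> 'v::real_vector) \<Rightarrow> (nat \<Rightarrow> 'v) \<Rightarrow> nat \<Rightarrow> 'v" where
  "midpt U W = (\<lambda>i. (1/2::real) *\<^sub>R (U i + W i))"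

definition gstep :: "nat \<Rightarrow> ('v \<Rightarrow> 'v) \<Rightarrow> (nat \<Rightarrow> 'v::real_inner) \<Rightarrow> real \<Rightarrow> nat \<Rightarrow> 'v" where
  "gstep N H Gh s = (\<lambda>j. Gh j - s *\<^sub>R tmul N (\<lambda>i. H (Gh i))
        (\<lambda>i k. idm i k - tinner N Gh Gh i k) j)"

definition V0N :: "nat \<Rightarrow> (nat \<Rightarrow> 'v::real_vector set) \<Rightarrow> (nat \<Rightarrow> 'v) set" where
  "V0N N S = {U. \<forall>j<N. U j \<in> span (S j)}"

definition lambda_max0 :: "nat \<Rightarrow> ('v \<Rightarrow> 'v) \<Rightarrow> (nat \<Rightarrow> 'v::real_inner set) \<Rightarrow> real" where
  "lambda_max0 N H S = Max (\<Union>j<N. (\<lambda>v. inner v (H v) / inner v v) ` S j)"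

end

(*
  The midpoint step U \<mapsto> ghat(U,s) is a Cayley transform of the skew-adjoint operator A_W,
  W = (ghat(U,s) + U)/2.  It therefore preserves the Gram matrix, and since H is self-adjoint
  it lowers the energy by exactly s \<Sum>\<^sub>i (H w_i, A_W w_i), which is (s/2) times the squared
  Frobenius norm of A_W.  Because U^T U \<le> I and ghat^T ghat = U^T U, the columns of W form a
  Bessel family, so \<parallel>A_W W\<parallel>\<^sup>2 is at most that Frobenius norm: the first half-step alone
  already decreases the energy by (s/2) \<parallel>A_W W\<parallel>\<^sup>2, without the correction -s|\<lambda>_1|/2.

  The correction g = ghat - s H ghat (I - ghat^T ghat) does not increase the energy: with
  Y = H ghat (I - ghat^T ghat) one has E(ghat) - E(g) = s (Y, H ghat) - (s\<^sup>2/2) (Y, H Y), where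
  \<parallel>Y\<parallel>\<^sup>2 \<le> (Y, H ghat) because 0 \<le> I - ghat^T ghat \<le> I, and (Y, H Y) \<le> \<lambda>_max \<parallel>Y\<parallel>\<^sup>2
  with s \<lambda>_max \<le> 2 by the step-size bound.
*)

theory Submission
  imports Defs
begin

definition gram_le_idm :: "nat \<Rightarrow> (nat \<Rightarrow> 'v::real_inner) \<Rightarrow> bool" where
  "gram_le_idm N F \<longleftrightarrow> psd_mat N (\<lambda>i j. idm i j - tinner N F F i j)"

lemma sum_idm_scaleR:
  fixes z :: "nat \<Rightarrow> 'v::real_vector"
  assumes "j < N"
  shows "(\<Sum>k<N. idm k j *\<^sub>R z k) = z j"
  using assms by (simp add: idm_def if_distrib if_distribR cong: if_cong)

lemma idm_quadratic_form: "(\<Sum>i<N. \<Sum>j<N. c i * idm i j * c j) = (\<Sum>i<N. c i * c i)"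
  by (simp add: idm_def if_distrib if_distribR cong: if_cong)

lemma bessel_if_gram_le_idm:
  fixes F :: "nat \<Rightarrow> 'v::real_inner"
  assumes "gram_le_idm N F"
  shows "(\<Sum>j<N. (inner (F j) x)\<^sup>2) \<le> inner x x"
proof -
  define c where "c j = inner (F j) x" for j
  define y where "y = (\<Sum>j<N. c j *\<^sub>R F j)"
  define \<sigma> where "\<sigma> = (\<Sum>j<N. c j * c j)"
  have "inner y y = (\<Sum>i<N. \<Sum>j<N. c i * tinner N F F i j * c j)"
    unfolding y_def tinner_def
    by (simp add: inner_sum_left inner_sum_right sum_distrib_left algebra_simps inner_commute)
  moreover have "0 \<le> (\<Sum>i<N. \<Sum>j<N. c i * (idm i j - tinner N F F i j) * c j)"
    using assms unfolding gram_le_idm_def psd_mat_def by blast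
  moreover have "(\<Sum>i<N. \<Sum>j<N. c i * (idm i j - tinner N F F i j) * c j)
      = \<sigma> - (\<Sum>i<N. \<Sum>j<N. c i * tinner N F F i j * c j)"
    by (simp add: \<sigma>_def right_diff_distrib left_diff_distrib sum_subtractf
        idm_quadratic_form)
  ultimately have y_le: "inner y y \<le> \<sigma>"
    by linarith
  have "\<sigma> = inner y x"
    unfolding y_def \<sigma>_def c_def by (simp add: inner_sum_left)
  hence "\<sigma>\<^sup>2 \<le> inner y y * inner x x"
    by (metis Cauchy_Schwarz_ineq)
  also have "\<dots> \<le> \<sigma> * inner x x"
    using y_le by (simp add: mult_right_mono)
  finally have "\<sigma> * \<sigma> \<le> \<sigma> * inner x x"
    by (simp add: power2_eq_square)
  moreover have "0 \<le> \<sigma>"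
    by (simp add: \<sigma>_def sum_nonneg)
  ultimately have "\<sigma> \<le> inner x x"
    by (metis inner_ge_zero less_eq_real_def mult_le_cancel_left_pos)
  thus ?thesis
    by (simp add: \<sigma>_def c_def power2_eq_square)
qed

lemma bessel_midpt:
  fixes F G :: "nat \<Rightarrow> 'v::real_inner"
  assumes "\<And>x. (\<Sum>j<N. (inner (F j) x)\<^sup>2) \<le> inner x x"
    and "\<And>x. (\<Sum>j<N. (inner (G j) x)\<^sup>2) \<le> inner x x"
  shows "(\<Sum>j<N. (inner (midpt F G j) x)\<^sup>2) \<le> inner x x"
proof -
  have "(inner (midpt F G j) x)\<^sup>2 \<le> ((inner (F j) x)\<^sup>2 + (inner (G j) x)\<^sup>2) / 2" for j
    using sum_squares_ge_zero[of "inner (F j) x - inner (G j) x" 0]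
    by (simp add: midpt_def inner_add_left power2_eq_square field_simps)
  hence "(\<Sum>j<N. (inner (midpt F G j) x)\<^sup>2)
      \<le> (\<Sum>j<N. ((inner (F j) x)\<^sup>2 + (inner (G j) x)\<^sup>2) / 2)"
    by (rule sum_mono)
  also have "\<dots> = ((\<Sum>j<N. (inner (F j) x)\<^sup>2) + (\<Sum>j<N. (inner (G j) x)\<^sup>2)) / 2"
    by (simp add: sum.distrib flip: sum_divide_distrib)
  also have "\<dots> \<le> inner x x"
    using assms[of x] by simp
  finally show ?thesis .
qed

lemma gram_le_idm_cross_form_nonneg:
  fixes F :: "nat \<Rightarrow> 'v::real_inner"
  assumes "gram_le_idm N F"
  shows "0 \<le> (\<Sum>j<N. (\<Sum>k<N. (idm k j - inner (F k) (F j)) * x k)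
                    * (\<Sum>l<N. inner (F l) (F j) * x l))"
proof -
  define v where "v = (\<Sum>l<N. x l *\<^sub>R F l)"
  have Fv: "(\<Sum>l<N. inner (F l) (F j) * x l) = inner (F j) v" for j
    unfolding v_def by (simp add: inner_sum_right inner_commute mult.commute)
  have "(\<Sum>k<N. (idm k j - inner (F k) (F j)) * x k) = x j - inner (F j) v" if "j < N" for j
  proof -
    have "(\<Sum>k<N. idm k j * x k) = x j"
      using sum_idm_scaleR[OF that, of x] by simp
    thus ?thesis
      by (simp add: left_diff_distrib sum_subtractf Fv[symmetric])
  qed
  hence "(\<Sum>j<N. (\<Sum>k<N. (idm k j - inner (F k) (F j)) * x k)
                    * (\<Sum>l<N. inner (F l) (F j) * x l))
      = (\<Sum>j<N. x j * inner (F j) v) - (\<Sum>j<N. (inner (F j) v)\<^sup>2)"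
    by (simp add: Fv power2_eq_square left_diff_distrib sum_subtractf)
  also have "(\<Sum>j<N. x j * inner (F j) v) = inner v v"
    unfolding v_def by (simp add: inner_sum_left)
  finally show ?thesis
    using bessel_if_gram_le_idm[OF assms, of v] by simp
qed

lemma gram_le_idm_cross_inner_nonneg:
  fixes F z :: "nat \<Rightarrow> 'v::euclidean_space"
  assumes "gram_le_idm N F"
  shows "0 \<le> (\<Sum>j<N. inner (\<Sum>k<N. (idm k j - inner (F k) (F j)) *\<^sub>R z k)
                          (\<Sum>l<N. inner (F l) (F j) *\<^sub>R z l))"
proof -
  have "(\<Sum>j<N. inner (\<Sum>k<N. (idm k j - inner (F k) (F j)) *\<^sub>R z k)
                     (\<Sum>l<N. inner (F l) (F j) *\<^sub>R z l))
      = (\<Sum>j<N. \<Sum>b\<in>Basis. (\<Sum>k<N. (idm k j - inner (F k) (F j)) * inner (z k) b)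
                          * (\<Sum>l<N. inner (F l) (F j) * inner (z l) b))"
    by (subst euclidean_inner) (simp add: inner_sum_left)
  also have "\<dots> = (\<Sum>b\<in>Basis. \<Sum>j<N. (\<Sum>k<N. (idm k j - inner (F k) (F j)) * inner (z k) b)
                          * (\<Sum>l<N. inner (F l) (F j) * inner (z l) b))"
    by (rule sum.swap)
  finally show ?thesis
    by (simp add: sum_nonneg gram_le_idm_cross_form_nonneg[OF assms])
qed

lemma Aop_skew: "inner (Aop N H w x) y = - inner x (Aop N H w y)"
  unfolding Aop_def
  by (simp add: inner_sum_left inner_sum_right inner_diff_left inner_diff_right sum_subtractf
      inner_commute ac_simps)

lemma inner_preserved_by_Cayley_step:
  fixes A :: "'v::real_inner \<Rightarrow> 'v"
  assumes skew: "\<And>x y. inner (A x) y = - inner x (A y)"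
    and step_i: "X i - U i = - s *\<^sub>R A (midpt X U i)"
    and step_j: "X j - U j = - s *\<^sub>R A (midpt X U j)"
  shows "inner (X i) (X j) = inner (U i) (U j)"
proof -
  have "inner (X i) (X j) - inner (U i) (U j)
      = inner (X i - U i) (midpt X U j) + inner (midpt X U i) (X j - U j)"
    by (simp add: midpt_def inner_add_left inner_add_right inner_diff_left inner_diff_right
        algebra_simps inner_commute)
  also have "\<dots> = - s * (inner (A (midpt X U i)) (midpt X U j)
                     + inner (midpt X U i) (A (midpt X U j)))"
    by (simp add: step_i step_j algebra_simps)
  also have "\<dots> = 0"
    by (simp add: skew)
  finally show ?thesis
    by simp
qed

lemma gram_le_idm_cong:
  assumes "\<And>i j. i < N \<Longrightarrow> j < N \<Longrightarrow> inner (X i) (X j) = inner (U i) (U j)"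
  shows "gram_le_idm N X \<longleftrightarrow> gram_le_idm N U"
proof -
  have "(\<Sum>i<N. \<Sum>j<N. c i * (idm i j - tinner N X X i j) * c j)
      = (\<Sum>i<N. \<Sum>j<N. c i * (idm i j - tinner N U U i j) * c j)" for c
    by (intro sum.cong refl) (simp add: tinner_def assms)
  thus ?thesis
    unfolding gram_le_idm_def psd_mat_def by (auto simp: tinner_def assms)
qed

lemma sum_Basis_skew_pair:
  fixes A :: "'v::euclidean_space \<Rightarrow> 'v"
  assumes skew: "\<And>x y. inner (A x) y = - inner x (A y)"
  shows "(\<Sum>b\<in>Basis. inner w b * inner h (A b) - inner h b * inner w (A b))
       = 2 * inner h (A w)"
proof -
  have "(\<Sum>b\<in>Basis. inner w b * inner h (A b) - inner h b * inner w (A b))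
      = (\<Sum>b\<in>Basis. inner h b * inner (A w) b) - (\<Sum>b\<in>Basis. inner w b * inner (A h) b)"
    by (simp add: skew[of h] skew[of w] inner_commute[of _ "A _"] sum_subtractf[symmetric])
  also have "\<dots> = inner h (A w) - inner w (A h)"
    by (simp flip: euclidean_inner)
  also have "\<dots> = 2 * inner h (A w)"
    using skew[of w h] by (simp add: inner_commute)
  finally show ?thesis .
qed

lemma Aop_frobenius:
  fixes H :: "'v::euclidean_space \<Rightarrow> 'v"
  shows "(\<Sum>b\<in>Basis. inner (Aop N H w b) (Aop N H w b))
       = 2 * (\<Sum>i<N. inner (H (w i)) (Aop N H w (w i)))"
proof -
  let ?A = "Aop N H w"
  have "(\<Sum>b\<in>Basis. inner (?A b) (?A b))
     = (\<Sum>b\<in>Basis. \<Sum>i<N. inner (w i) b * inner (H (w i)) (?A b)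
                            - inner (H (w i)) b * inner (w i) (?A b))"
    by (intro sum.cong refl) (subst (1) Aop_def, simp add: inner_sum_left inner_diff_left)
  also have "\<dots> = (\<Sum>i<N. \<Sum>b\<in>Basis. inner (w i) b * inner (H (w i)) (?A b)
                            - inner (H (w i)) b * inner (w i) (?A b))"
    by (rule sum.swap)
  also have "\<dots> = (\<Sum>i<N. 2 * inner (H (w i)) (?A (w i)))"
    by (simp add: sum_Basis_skew_pair Aop_skew)
  finally show ?thesis
    by (simp add: sum_distrib_left)
qed

lemma sum_inner_skew_le_sum_Basis:
  fixes A :: "'v::euclidean_space \<Rightarrow> 'v"
  assumes skew: "\<And>x y. inner (A x) y = - inner x (A y)"
    and bessel: "\<And>x. (\<Sum>j<N. (inner (w j) x)\<^sup>2) \<le> inner x x"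
  shows "(\<Sum>j<N. inner (A (w j)) (A (w j))) \<le> (\<Sum>b\<in>Basis. inner (A b) (A b))"
proof -
  have "(\<Sum>j<N. inner (A (w j)) (A (w j))) = (\<Sum>j<N. \<Sum>b\<in>Basis. (inner (w j) (A b))\<^sup>2)"
    by (intro sum.cong refl) (subst euclidean_inner, simp add: skew power2_eq_square)
  also have "\<dots> = (\<Sum>b\<in>Basis. \<Sum>j<N. (inner (w j) (A b))\<^sup>2)"
    by (rule sum.swap)
  also have "\<dots> \<le> (\<Sum>b\<in>Basis. inner (A b) (A b))"
    by (intro sum_mono bessel)
  finally show ?thesis .
qed

lemma inner_self_adjoint_diff:
  fixes H :: "'v::real_inner \<Rightarrow> 'v"
  assumes "linear H" and "\<And>x y. inner (H x) y = inner x (H y)"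
  shows "inner a (H a) - inner b (H b) = inner (a + b) (H (a - b))"
proof -
  have "inner a (H b) = inner b (H a)"
    using assms(2)[of b a] by (simp add: inner_commute)
  thus ?thesis
    by (simp add: linear_diff[OF assms(1)] inner_add_left inner_diff_right)
qed

lemma inner_self_adjoint_step:
  fixes H :: "'v::real_inner \<Rightarrow> 'v"
  assumes H_lin: "linear H" and H_sa: "\<And>x y. inner (H x) y = inner x (H y)"
  shows "inner a (H a) - inner (a - s *\<^sub>R b) (H (a - s *\<^sub>R b))
       = 2 * s * inner b (H a) - s\<^sup>2 * inner b (H b)"
proof -
  have "inner a (H a) - inner (a - s *\<^sub>R b) (H (a - s *\<^sub>R b))
      = inner (2 *\<^sub>R a - s *\<^sub>R b) (H (s *\<^sub>R b))"
    unfolding inner_self_adjoint_diff[OF H_lin H_sa] by (simp add: scaleR_2 add_diff_eq)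
  also have "\<dots> = 2 * s * inner b (H a) - s\<^sup>2 * inner b (H b)"
    using H_sa[of a b] by (simp add: linear_scale[OF H_lin] inner_diff_left inner_commute[of b]
        power2_eq_square algebra_simps)
  finally show ?thesis .
qed

lemma power2_tnorm: "(tnorm N W)\<^sup>2 = (\<Sum>i<N. inner (W i) (W i))"
  by (simp add: tnorm_def sum_nonneg)

lemma energy_Cayley_step_decrease:
  fixes H :: "'v::euclidean_space \<Rightarrow> 'v" and X U :: "nat \<Rightarrow> 'v"
  defines "w \<equiv> midpt X U"
  assumes H_lin: "linear H" and H_sa: "\<And>x y. inner (H x) y = inner x (H y)"
    and step: "\<And>i. i < N \<Longrightarrow> X i - U i = - s *\<^sub>R Aop N H w (w i)"
    and bessel: "\<And>x. (\<Sum>j<N. (inner (w j) x)\<^sup>2) \<le> inner x x"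
    and "0 \<le> s"
  shows "s / 2 * (tnorm N (Aapp N H w w))\<^sup>2 \<le> energy N H U - energy N H X"
proof -
  let ?A = "Aop N H w"
  define K where "K = (\<Sum>i<N. inner (H (w i)) (?A (w i)))"
  have decrease_i:
    "inner (U i) (H (U i)) - inner (X i) (H (X i)) = 2 * s * inner (H (w i)) (?A (w i))"
    if "i < N" for i
  proof -
    have "inner (U i) (H (U i)) - inner (X i) (H (X i)) = inner (2 *\<^sub>R w i) (H (U i - X i))"
      by (simp add: inner_self_adjoint_diff[OF H_lin H_sa] w_def midpt_def add.commute)
    also have "U i - X i = s *\<^sub>R ?A (w i)"
      using step[OF that] by (metis minus_diff_eq scaleR_minus_left minus_minus)
    also have "inner (2 *\<^sub>R w i) (H (s *\<^sub>R ?A (w i)))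
        = 2 * s * inner (H (w i)) (?A (w i))"
      by (simp add: linear_scale[OF H_lin] H_sa)
    finally show ?thesis .
  qed
  have "energy N H U - energy N H X
      = (\<Sum>i<N. inner (U i) (H (U i)) - inner (X i) (H (X i))) / 2"
    by (simp add: energy_def sum_subtractf)
  also have "\<dots> = (\<Sum>i<N. 2 * s * inner (H (w i)) (?A (w i))) / 2"
    by (rule arg_cong[where f = "\<lambda>t. t / 2"], rule sum.cong) (simp_all add: decrease_i)
  also have "\<dots> = s * K"
    by (simp add: K_def mult.assoc flip: sum_distrib_left)
  finally have "energy N H U - energy N H X = s * K" .
  moreover have norm_le: "(tnorm N (Aapp N H w w))\<^sup>2 \<le> 2 * K"
    using sum_inner_skew_le_sum_Basis[of "Aop N H w", OF Aop_skew bessel]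
      Aop_frobenius[of N H w]
    by (simp add: power2_tnorm Aapp_def K_def)
  ultimately show ?thesis
    using mult_left_mono[OF norm_le \<open>0 \<le> s\<close>] by simp
qed

lemma orthonormal_expansion:
  fixes e :: "nat \<Rightarrow> 'v::euclidean_space"
  assumes e_orth: "\<And>i j. i < DIM('v) \<Longrightarrow> j < DIM('v) \<Longrightarrow>
      inner (e i) (e j) = (if i = j then 1 else 0)"
  shows "x = (\<Sum>m<DIM('v). inner x (e m) *\<^sub>R e m)"
proof -
  let ?E = "e ` {..<DIM('v)}"
  have "inj_on e {..<DIM('v)}"
    by (rule inj_onI) (metis e_orth lessThan_iff zero_neq_one)
  hence "card ?E = DIM('v)"
    by (simp add: card_image)
  moreover have "independent ?E"
    by (rule pairwise_orthogonal_independent)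
      (auto simp: pairwise_def orthogonal_def e_orth, metis e_orth inner_zero_left zero_neq_one)
  ultimately have span_E: "UNIV \<subseteq> span ?E"
    by (intro card_ge_dim_independent) auto
  define d where "d = x - (\<Sum>m<DIM('v). inner x (e m) *\<^sub>R e m)"
  have "orthogonal d y" if "y \<in> ?E" for y
    using that by (auto simp: d_def orthogonal_def inner_diff_left inner_sum_left e_orth
        if_distrib if_distribR cong: if_cong)
  hence "orthogonal d d"
    using orthogonal_to_span span_E by blast
  thus ?thesis
    by (simp add: d_def orthogonal_self)
qed

lemma inner_le_max_eigenvalue:
  fixes H :: "'v::euclidean_space \<Rightarrow> 'v"
  assumes H_sa: "\<And>x y. inner (H x) y = inner x (H y)"
    and lam_sorted: "\<And>i j. i \<le> j \<Longrightarrow> j < DIM('v) \<Longrightarrow> lam i \<le> lam j"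
    and e_orth: "\<And>i j. i < DIM('v) \<Longrightarrow> j < DIM('v) \<Longrightarrow>
      inner (e i) (e j) = (if i = j then 1 else 0)"
    and e_eig: "\<And>i. i < DIM('v) \<Longrightarrow> H (e i) = lam i *\<^sub>R e i"
  shows "inner x (H x) \<le> lam (DIM('v) - 1) * inner x x"
proof -
  define c where "c m = inner x (e m)" for m
  have inner_x: "inner x y = (\<Sum>m<DIM('v). c m * inner (e m) y)" for y
  proof -
    have "inner x y = inner (\<Sum>m<DIM('v). c m *\<^sub>R e m) y"
      unfolding c_def by (simp flip: orthonormal_expansion[OF e_orth])
    thus ?thesis
      by (simp add: inner_sum_left)
  qed
  have "inner (e m) (H x) = lam m * c m" if "m < DIM('v)" for m
    using H_sa[of "e m" x] by (simp add: e_eig[OF that] c_def inner_commute)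
  hence "inner x (H x) = (\<Sum>m<DIM('v). lam m * (c m)\<^sup>2)"
    unfolding inner_x by (intro sum.cong refl) (simp add: power2_eq_square)
  also have "\<dots> \<le> (\<Sum>m<DIM('v). lam (DIM('v) - 1) * (c m)\<^sup>2)"
    by (intro sum_mono mult_right_mono lam_sorted) auto
  also have "\<dots> = lam (DIM('v) - 1) * inner x x"
    by (simp add: inner_x[of x] sum_distrib_left c_def inner_commute power2_eq_square)
  finally show ?thesis .
qed

lemma energy_gstep_le:
  fixes H :: "'v::euclidean_space \<Rightarrow> 'v" and G :: "nat \<Rightarrow> 'v"
  assumes H_lin: "linear H" and H_sa: "\<And>x y. inner (H x) y = inner x (H y)"
    and H_le: "\<And>x. inner x (H x) \<le> lmax * inner x x"
    and G: "gram_le_idm N G" and "0 \<le> s" and "s * lmax \<le> 2"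
  shows "energy N H (gstep N H G s) \<le> energy N H G"
proof -
  define z where "z k = H (G k)" for k
  define y where "y j = (\<Sum>k<N. (idm k j - inner (G k) (G j)) *\<^sub>R z k)" for j
  define P where "P = (\<Sum>j<N. inner (y j) (z j))"
  define Q where "Q = (\<Sum>j<N. inner (y j) (y j))"
  define R where "R = (\<Sum>j<N. inner (y j) (H (y j)))"
  have step: "gstep N H G s j = G j - s *\<^sub>R y j" for j
    unfolding gstep_def tmul_def tinner_def y_def z_def by simp
  have "inner (G j) (H (G j)) - inner (gstep N H G s j) (H (gstep N H G s j))
      = 2 * s * inner (y j) (z j) - s\<^sup>2 * inner (y j) (H (y j))" for j
    by (simp add: step inner_self_adjoint_step[OF H_lin H_sa] z_def)
  hence "(\<Sum>j<N. inner (G j) (H (G j)) - inner (gstep N H G s j) (H (gstep N H G s j)))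
      = 2 * s * P - s\<^sup>2 * R"
    by (simp add: P_def R_def sum_subtractf sum_distrib_left)
  hence decrease: "energy N H G - energy N H (gstep N H G s) = (2 * s * P - s\<^sup>2 * R) / 2"
    by (simp add: energy_def sum_subtractf)
  have z_minus_y: "z j - y j = (\<Sum>l<N. inner (G l) (G j) *\<^sub>R z l)" if "j < N" for j
    by (simp add: y_def scaleR_left_diff_distrib sum_subtractf sum_idm_scaleR[OF that])
  have "P - Q = (\<Sum>j<N. inner (y j) (z j - y j))"
    by (simp add: P_def Q_def inner_diff_right sum_subtractf)
  also have "\<dots> = (\<Sum>j<N. inner (y j) (\<Sum>l<N. inner (G l) (G j) *\<^sub>R z l))"
    by (rule sum.cong) (simp_all add: z_minus_y)
  finally have Q_le_P: "Q \<le> P"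
    using gram_le_idm_cross_inner_nonneg[OF G, of z] by (simp add: y_def)
  have "0 \<le> Q"
    by (simp add: Q_def sum_nonneg)
  have "R \<le> lmax * Q"
    unfolding R_def Q_def sum_distrib_left by (intro sum_mono H_le)
  hence "s\<^sup>2 * R \<le> s * (s * lmax * Q)"
    using mult_left_mono[of R "lmax * Q" "s\<^sup>2"] by (simp add: power2_eq_square algebra_simps)
  also have "\<dots> \<le> s * (2 * P)"
  proof (rule mult_left_mono[OF _ \<open>0 \<le> s\<close>], cases "0 \<le> lmax")
    case True
    thus "s * lmax * Q \<le> 2 * P"
      using mult_mono[of "s * lmax" 2 Q P] Q_le_P \<open>0 \<le> Q\<close> \<open>s * lmax \<le> 2\<close> by simp
  next
    case False
    hence "s * lmax * Q \<le> 0"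
      using \<open>0 \<le> s\<close> \<open>0 \<le> Q\<close> by (simp add: mult_nonneg_nonpos mult_nonpos_nonneg)
    thus "s * lmax * Q \<le> 2 * P"
      using Q_le_P \<open>0 \<le> Q\<close> by simp
  qed
  finally show ?thesis
    using decrease by simp
qed

lemma step_size_mult_le_two:
  fixes lmin lmax s :: real
  assumes "lmin < 0" and "lmin \<le> lmax" and "0 \<le> s" and "s < 2 / \<bar>lmin - lmax\<bar>"
  shows "s * lmax \<le> 2"
proof (cases "lmax \<le> 0")
  case True
  thus ?thesis
    using \<open>0 \<le> s\<close> by (smt (verit) mult_nonneg_nonpos)
next
  case False
  hence "s * (lmax - lmin) < 2"
    using assms by (simp add: field_simps)
  moreover have "s * lmin \<le> 0"
    using assms(1,3) by (simp add: mult_nonneg_nonpos)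
  ultimately show ?thesis
    by (simp add: right_diff_distrib)
qed

theorem lemma4p3:
  fixes H :: "'v::euclidean_space \<Rightarrow> 'v"
    and N :: nat
    and lam :: "nat \<Rightarrow> real"
    and e :: "nat \<Rightarrow> 'v"
    and Vs :: "nat \<Rightarrow> 'v"
    and S :: "nat \<Rightarrow> 'v set"
    and eta_a eta_b delta_star delta_q delta_e s :: real
    and ghat :: "(nat \<Rightarrow> 'v) \<Rightarrow> real \<Rightarrow> nat \<Rightarrow> 'v"
    and U :: "nat \<Rightarrow> 'v"
  assumes H_lin: "linear H"
    and H_sa: "\<And>x y. inner (H x) y = inner x (H y)"
    \<comment> \<open>eigenvalues lambda_1 <= ... <= lambda_{N_g} (indexed from 0) with orthonormal eigenbasis\<close>
    and lam_sorted: "\<And>i j. i \<le> j \<Longrightarrow> j < DIM('v) \<Longrightarrow> lam i \<le> lam j"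
    and e_orth: "\<And>i j. i < DIM('v) \<Longrightarrow> j < DIM('v) \<Longrightarrow>
      inner (e i) (e j) = (if i = j then 1 else 0)"
    and e_eig: "\<And>i. i < DIM('v) \<Longrightarrow> H (e i) = lam i *\<^sub>R e i"
    and lam1_neg: "lam 0 < 0"
    and N_pos: "0 < N" and N_lt: "N < DIM('v)"
    and gap: "lam (N - 1) < lam N"
    \<comment> \<open>V_* : V_*^T V_* = I_N, H V_* = V_* diag(lambda_1,...,lambda_N)\<close>
    and Vs_orth: "\<And>i j. i < N \<Longrightarrow> j < N \<Longrightarrow> inner (Vs i) (Vs j) = (if i = j then 1 else 0)"
    and Vs_eig: "\<And>i. i < N \<Longrightarrow> H (Vs i) = lam i *\<^sub>R Vs i"
    \<comment> \<open>the spaces V_{0_j}, spanned by d_j >= 1 eigenvectors of H, with lambda_max^0 <= 0\<close>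
    and S_fin: "\<And>j. j < N \<Longrightarrow> finite (S j)"
    and S_ne: "\<And>j. j < N \<Longrightarrow> S j \<noteq> {}"
    and S_eig: "\<And>j v. j < N \<Longrightarrow> v \<in> S j \<Longrightarrow> v \<noteq> 0 \<and> (\<exists>\<mu>. H v = \<mu> *\<^sub>R v)"
    and lmax0: "lambda_max0 N H S \<le> 0"
    \<comment> \<open>the constants and the (unique) implicit function ghat\<close>
    and eta_a_pos: "eta_a > 0" and eta_b_pos: "eta_b > 0" and delta_star_pos: "delta_star > 0"
    and ghat_ball: "\<And>W t. W \<in> tball N Vs eta_a \<Longrightarrow> 0 \<le> t \<Longrightarrow> t \<le> delta_star \<Longrightarrow>
         ghat W t \<in> tball N Vs eta_b"
    and ghat_eq: "\<And>W t. W \<in> tball N Vs eta_a \<Longrightarrow> 0 \<le> t \<Longrightarrow> t \<le> delta_star \<Longrightarrow>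
         \<forall>i<N. ghat W t i - W i
           = - t *\<^sub>R Aapp N H (midpt (ghat W t) W) (midpt (ghat W t) W) i"
    and ghat_unique: "\<And>W t X. W \<in> tball N Vs eta_a \<Longrightarrow> 0 \<le> t \<Longrightarrow> t \<le> delta_star \<Longrightarrow>
         X \<in> tball N Vs eta_b \<Longrightarrow>
         (\<forall>i<N. X i - W i = - t *\<^sub>R Aapp N H (midpt X W) (midpt X W) i) \<Longrightarrow>
         \<forall>i<N. X i = ghat W t i"
    \<comment> \<open>step size restrictions\<close>
    and dq_pos: "0 < delta_q"
    and dq_bound: "delta_q < min ((sqrt 2 - 1) / \<bar>lam 0\<bar>) (2 / \<bar>lam 0 - lam (DIM('v) - 1)\<bar>)"
    and de_def: "delta_e = min delta_star delta_q"
    and U_mem: "U \<in> tball N Vs eta_a" "U \<in> V0N N S" "U \<in> quasi_stiefel N"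
    and s_range: "0 \<le> s" "s \<le> delta_e"
  shows "energy N H U - energy N H (gstep N H (ghat U s) s)
     \<ge> s * (1/2 - s/2 * \<bar>lam 0\<bar>)
         * (tnorm N (Aapp N H (midpt (ghat U s) U) (midpt (ghat U s) U)))\<^sup>2"
proof -
  define w where "w = midpt (ghat U s) U"
  have s_le: "s \<le> delta_star" "s \<le> delta_q"
    using s_range de_def by auto
  have step: "ghat U s i - U i = - s *\<^sub>R Aop N H w (w i)" if "i < N" for i
    using ghat_eq[OF U_mem(1) s_range(1) s_le(1)] that by (simp add: w_def Aapp_def)
  have U_gram: "gram_le_idm N U"
    using U_mem(3) by (simp add: quasi_stiefel_def gram_le_idm_def)
  have G_gram: "gram_le_idm N (ghat U s)"
    using U_gram gram_le_idm_cong inner_preserved_by_Cayley_step[OF Aop_skew] step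
    by (metis w_def)
  have w_bessel: "(\<Sum>j<N. (inner (w j) x)\<^sup>2) \<le> inner x x" for x
    unfolding w_def by (intro bessel_midpt bessel_if_gram_le_idm G_gram U_gram)
  have "lam 0 \<le> lam (DIM('v) - 1)"
    by (rule lam_sorted) auto
  hence "s * lam (DIM('v) - 1) \<le> 2"
    using step_size_mult_le_two[OF lam1_neg _ s_range(1)] s_le(2) dq_bound by simp
  hence "energy N H (gstep N H (ghat U s) s) \<le> energy N H (ghat U s)"
    using energy_gstep_le[OF H_lin H_sa inner_le_max_eigenvalue[OF H_sa lam_sorted e_orth e_eig]
          G_gram s_range(1)] by blast
  moreover have "s / 2 * (tnorm N (Aapp N H w w))\<^sup>2 \<le> energy N H U - energy N H (ghat U s)"
    using energy_Cayley_step_decrease[OF H_lin H_sa _ _ s_range(1)] step w_bessel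
    by (simp add: w_def)
  moreover have "s * (1/2 - s/2 * \<bar>lam 0\<bar>) * (tnorm N (Aapp N H w w))\<^sup>2
      \<le> s / 2 * (tnorm N (Aapp N H w w))\<^sup>2"
    using s_range(1) by (intro mult_right_mono) (simp_all add: algebra_simps)
  ultimately show ?thesis
    by (simp add: w_def)
qed

end
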